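(* Let $\Gamma$ be a finite complete graph whose edges are coloured red, green and blue in an arbitrary manner. Then there is a finite group $G$ and an injective map $\iota$ from the vertex set of $\Gamma$ into $G$ such that, for distinct vertices $u,v$: if $\{u,v\}$ is red then $\iota(u),\iota(v)$ are adjacent in the enhanced power graph of $G$; if $\{u,v\}$ is green then $\iota(u),\iota(v)$ are adjacent in the commuting graph of $G$ but not in the enhanced power graph; if $\{u,v\}$ is blue then $\iota(u),\iota(v)$ are non-adjacent in the commuting graph of $G$.
   Context: For a group $G$: the commuting graph has vertex set $G$ with distinct $x,y$ adjacent iff $xy=yx$; the enhanced power graph has vertex set $G$ with distinct $x,y$ adjacent iff $\langle x,y\rangle$ is cyclic. *)

theory Defs
  imports "HOL-Algebra.Algebra"
begin

datatype colour = Red | Green | Blue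

definition commuting_adj :: "('g, 'b) monoid_scheme \<Rightarrow> 'g \<Rightarrow> 'g \<Rightarrow> bool" where
  "commuting_adj G x y \<longleftrightarrow> x \<in> carrier G \<and> y \<in> carrier G \<and> x \<noteq> y \<and>
     x \<otimes>\<^bsub>G\<^esub> y = y \<otimes>\<^bsub>G\<^esub> x"

definition cyclic_subgroup :: "('g, 'b) monoid_scheme \<Rightarrow> 'g set \<Rightarrow> bool" where
  "cyclic_subgroup G H \<longleftrightarrow> (\<exists>z \<in> carrier G. H = generate G {z})"

definition enhanced_power_adj :: "('g, 'b) monoid_scheme \<Rightarrow> 'g \<Rightarrow> 'g \<Rightarrow> bool" where
  "enhanced_power_adj G x y \<longleftrightarrow> x \<in> carrier G \<and> y \<in> carrier G \<and> x \<noteq> y \<and>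
     cyclic_subgroup G (generate G {x, y})"

end

theory Submission
  imports Defs "HOL-Number_Theory.Cong"
begin

text \<open>For each ordered pair \<open>(s, t)\<close> of distinct vertices take the Heisenberg group over
  \<open>\<int>/p\<^sub>s\<^sub>t\<close>, with pairwise distinct primes \<open>p\<^sub>s\<^sub>t\<close>, and let the group be their direct product.
  With \<open>x = (1,0,0)\<close>, \<open>y = (0,1,0)\<close> and the central \<open>z = (0,0,1)\<close>, a vertex \<open>u\<close> has coordinate
  \<open>x\<close> at every pair \<open>(u, t)\<close>; at a pair \<open>(s, u)\<close> it has coordinate \<open>1\<close>, \<open>z\<close> or \<open>y\<close> according as
  \<open>{s, u}\<close> is red, green or blue; all other coordinates are trivial. Two vertices \<open>u, v\<close> can
  only both be nontrivial at \<open>(u, v)\<close> and \<open>(v, u)\<close>. So a blue pair contains the non-commuting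
  \<open>x, y\<close>; a green pair commutes, but contains \<open>x, z\<close>, which generate \<open>(\<int>/p)\<^sup>2\<close>; and a red
  pair has disjoint supports, hence coprime orders, so it generates the same cyclic group as its
  product. Finally the finite group is transported to one whose carrier lies in \<open>nat\<close>.\<close>

section \<open>Heisenberg groups modulo \<open>n\<close>\<close>

lemma mod_eq_by_congs:
  fixes a b c d :: int
  shows "[a = c] (mod n) \<Longrightarrow> [b = d] (mod n) \<Longrightarrow> c = d \<Longrightarrow> a mod n = b mod n"
  by (simp add: cong_def)

lemma mod_eq_0_by_cong:
  fixes a c :: int
  shows "[a = c] (mod n) \<Longrightarrow> c = 0 \<Longrightarrow> a mod n = 0"
  by (simp add: cong_def)

text \<open>Intro rules that strip inner reductions modulo \<open>n\<close>, so that an identity between nested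
  \<open>mod\<close>-expressions reduces to a ring identity.\<close>
lemmas cong_strip_mod =
  cong_mod_leftI cong_add cong_diff cong_mult cong_minus_minus_iff[THEN iffD2] cong_refl

text \<open>\<open>(a, b, c)\<close> stands for the unitriangular matrix \<open>[[1, a, c], [0, 1, b], [0, 0, 1]]\<close>.\<close>
definition heisenberg :: "int \<Rightarrow> (int \<times> int \<times> int) monoid" where
  "heisenberg n = \<lparr>carrier = {0..<n} \<times> {0..<n} \<times> {0..<n},
     monoid.mult = (\<lambda>(a, b, c) (a', b', c'). ((a + a') mod n, (b + b') mod n, (c + c' + a * b') mod n)),
     one = (0, 0, 0)\<rparr>"

lemma carrier_heisenberg [simp]: "carrier (heisenberg n) = {0..<n} \<times> {0..<n} \<times> {0..<n}"
  by (simp add: heisenberg_def)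

lemma one_heisenberg [simp]: "\<one>\<^bsub>heisenberg n\<^esub> = (0, 0, 0)"
  by (simp add: heisenberg_def)

lemma mult_heisenberg [simp]:
  "(a, b, c) \<otimes>\<^bsub>heisenberg n\<^esub> (a', b', c') = ((a + a') mod n, (b + b') mod n, (c + c' + a * b') mod n)"
  by (simp add: heisenberg_def)

lemma group_heisenberg:
  assumes "n > 0"
  shows "group (heisenberg n)"
proof (rule groupI)
  show "x \<otimes>\<^bsub>heisenberg n\<^esub> y \<in> carrier (heisenberg n)" for x y
    using assms by (cases x; cases y) auto
  show "\<one>\<^bsub>heisenberg n\<^esub> \<in> carrier (heisenberg n)"
    using assms by simp
  show "x \<otimes>\<^bsub>heisenberg n\<^esub> y \<otimes>\<^bsub>heisenberg n\<^esub> z = x \<otimes>\<^bsub>heisenberg n\<^esub> (y \<otimes>\<^bsub>heisenberg n\<^esub> z)" for x y z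
    by (cases x; cases y; cases z)
      (simp; intro conjI; rule mod_eq_by_congs, (rule cong_strip_mod)+, simp add: algebra_simps)
  show "\<one>\<^bsub>heisenberg n\<^esub> \<otimes>\<^bsub>heisenberg n\<^esub> x = x" if "x \<in> carrier (heisenberg n)" for x
    using that by auto
  show "\<exists>y \<in> carrier (heisenberg n). y \<otimes>\<^bsub>heisenberg n\<^esub> x = \<one>\<^bsub>heisenberg n\<^esub>" for x
  proof (cases x)
    case (fields a b c)
    let ?y = "((- a) mod n, (- b) mod n, (a * b - c) mod n)"
    have "?y \<otimes>\<^bsub>heisenberg n\<^esub> x = \<one>\<^bsub>heisenberg n\<^esub>"
      unfolding fields mult_heisenberg one_heisenberg prod.inject
      by (intro conjI; rule mod_eq_0_by_cong, (rule cong_strip_mod)+, simp)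
    moreover have "?y \<in> carrier (heisenberg n)"
      using assms by simp
    ultimately show ?thesis
      by blast
  qed
qed

lemma heisenberg_pow:
  "(a, b, c) [^]\<^bsub>heisenberg n\<^esub> k =
     ((int k * a) mod n, (int k * b) mod n, (int k * c + int (k choose 2) * a * b) mod n)"
proof (induction k)
  case (Suc k)
  show ?case
    unfolding nat_pow_Suc Suc.IH mult_heisenberg prod.inject
    by (intro conjI; rule mod_eq_by_congs, (rule cong_strip_mod)+, simp add: numeral_2_eq_2 algebra_simps)
qed (simp add: numeral_2_eq_2)

lemma heisenberg_pow_eq_one:
  assumes "a * b = 0" and "n dvd int k"
  shows "(a, b, c) [^]\<^bsub>heisenberg n\<^esub> k = \<one>\<^bsub>heisenberg n\<^esub>"
  using assms by (auto simp: heisenberg_pow intro!: dvd_imp_mod_0 dvd_mult2)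

lemma heisenberg_not_commute:
  assumes "n \<ge> 2"
  shows "(1, 0, 0) \<otimes>\<^bsub>heisenberg n\<^esub> (0, 1, 0) \<noteq> (0, 1, 0) \<otimes>\<^bsub>heisenberg n\<^esub> (1, 0, 0)"
  using assms by simp

lemma heisenberg_no_common_generator:
  fixes k l :: nat
  assumes "n \<ge> 2" and "z [^]\<^bsub>heisenberg n\<^esub> k = (1, 0, 0)"
  shows "z [^]\<^bsub>heisenberg n\<^esub> l \<noteq> (0, 0, 1)"
proof
  obtain a b c where z: "z = (a, b, c)"
    by (cases z) auto
  assume "z [^]\<^bsub>heisenberg n\<^esub> l = (0, 0, 1)"
  with assms z have ka: "[int k * a = 1] (mod n)" and kb: "[int k * b = 0] (mod n)"
    and la: "[int l * a = 0] (mod n)" and lc: "[int l * c + int (l choose 2) * a * b = 1] (mod n)"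
    by (simp_all add: heisenberg_pow cong_def)
  \<comment> \<open>\<open>k a \<equiv> 1\<close> makes \<open>a\<close> a unit, which forces \<open>b \<equiv> 0\<close> and \<open>l \<equiv> 0\<close>.\<close>
  have "[b = int k * b * a] (mod n)"
    using cong_mult[OF cong_refl[of b] ka] by (simp add: cong_sym mult.commute mult.left_commute)
  then have b: "[b = 0] (mod n)"
    using cong_trans cong_mult[OF kb cong_refl[of a]] by fastforce
  have "[int l = int l * a * int k] (mod n)"
    using cong_mult[OF cong_refl[of "int l"] ka] by (simp add: cong_sym mult.commute mult.left_commute)
  then have l: "[int l = 0] (mod n)"
    using cong_trans cong_mult[OF la cong_refl[of "int k"]] by fastforce
  have "[int l * c + int (l choose 2) * a * b = 0] (mod n)"
    using cong_add[OF cong_mult[OF l cong_refl[of c]] cong_mult[OF cong_refl[of "int (l choose 2) * a"] b]]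
    by simp
  with lc have "[1 = 0] (mod n)"
    using cong_sym cong_trans by blast
  with assms show False
    by (simp add: cong_def)
qed

lemma pow_product_group:
  "x [^]\<^bsub>product_group I G\<^esub> (k::nat) = (\<lambda>i\<in>I. x i [^]\<^bsub>G i\<^esub> k)"
  by (induction k) (auto simp: fun_eq_iff)

lemma (in monoid) pow_mod_exponent:
  assumes "x \<in> carrier G" and "x [^] n = \<one>"
  shows "x [^] (k::nat) = x [^] (k mod n)"
proof -
  have "x [^] k = (x [^] n) [^] (k div n) \<otimes> x [^] (k mod n)"
    using assms(1) by (simp add: nat_pow_pow nat_pow_mult)
  then show ?thesis
    using assms by simp
qed

lemma (in group) mem_generate_mult_if_coprime_exponents:
  fixes P Q :: nat
  assumes a: "a \<in> carrier G" and b: "b \<in> carrier G" and comm: "a \<otimes> b = b \<otimes> a"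
    and "a [^] P = \<one>" and "b [^] Q = \<one>" and "coprime P Q"
  shows "a \<in> generate G {a \<otimes> b}"
proof -
  obtain t where t: "[Q * t = 1] (mod P)"
    using cong_solve_coprime_nat \<open>coprime P Q\<close> by (metis coprime_commute One_nat_def)
  have "a [^] (Q * t) = a [^] (1::nat)"
    using pow_mod_exponent[OF a \<open>a [^] P = \<one>\<close>] t by (metis cong_def)
  moreover have "b [^] (Q * t) = \<one>"
    using b \<open>b [^] Q = \<one>\<close> by (simp add: nat_pow_pow [symmetric])
  ultimately have "(a \<otimes> b) [^] (Q * t) = a"
    using a b comm by (simp add: pow_mult_distrib)
  moreover have "(a \<otimes> b) [^] (Q * t) \<in> generate G {a \<otimes> b}"
    using a b generate_pow[of "a \<otimes> b"] by (metis (mono_tags) int_pow_int m_closed mem_Collect_eq UNIV_I)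
  ultimately show ?thesis
    by simp
qed

lemma (in group) generate_pair_eq_generate_mult:
  fixes P Q :: nat
  assumes "a \<in> carrier G" and "b \<in> carrier G" and "a \<otimes> b = b \<otimes> a"
    and "a [^] P = \<one>" and "b [^] Q = \<one>" and "coprime P Q"
  shows "generate G {a, b} = generate G {a \<otimes> b}"
proof
  have "{a, b} \<subseteq> generate G {a \<otimes> b}"
    using assms mem_generate_mult_if_coprime_exponents[of a b P Q]
      mem_generate_mult_if_coprime_exponents[of b a Q P] by (simp add: coprime_commute)
  then show "generate G {a, b} \<subseteq> generate G {a \<otimes> b}"
    using assms by (intro generate_subgroup_incl generate_is_subgroup) auto
  have "a \<otimes> b \<in> generate G {a, b}"
    by (intro generate.eng generate.incl) auto
  then show "generate G {a \<otimes> b} \<subseteq> generate G {a, b}"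
    using assms by (intro generate_subgroup_incl generate_is_subgroup) auto
qed

definition image_group :: "('a \<Rightarrow> 'b) \<Rightarrow> ('a, 'c) monoid_scheme \<Rightarrow> 'b monoid" where
  "image_group f G = \<lparr>carrier = f ` carrier G,
     monoid.mult = (\<lambda>x y. f (the_inv_into (carrier G) f x \<otimes>\<^bsub>G\<^esub> the_inv_into (carrier G) f y)),
     one = f \<one>\<^bsub>G\<^esub>\<rparr>"

lemma iso_image_group:
  assumes "group G" and "inj_on f (carrier G)"
  shows "f \<in> iso G (image_group f G)"
  using assms by (auto simp: iso_iff hom_def image_group_def the_inv_into_f_f group.is_monoid)

lemma group_image_group:
  assumes "group G" and "inj_on f (carrier G)"
  shows "group (image_group f G)"
  using group.iso_imp_img_group[OF assms(1) iso_image_group[OF assms]] by (simp add: image_group_def)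

lemma countable_group_iso_nat_group:
  assumes "group G" and "countable (carrier G)"
  shows "\<exists>(H :: nat monoid) f. group H \<and> f \<in> iso G H"
proof -
  obtain f :: "_ \<Rightarrow> nat" where "inj_on f (carrier G)"
    using assms(2) by (auto simp: countable_def)
  then show ?thesis
    using assms(1) group_image_group iso_image_group by blast
qed

lemma iso_commuting_adj_iff:
  assumes "group G" and "f \<in> iso G H" and "x \<in> carrier G" and "y \<in> carrier G"
  shows "commuting_adj H (f x) (f y) \<longleftrightarrow> commuting_adj G x y"
proof -
  interpret group G by fact
  have inj: "inj_on f (carrier G)" and surj: "f ` carrier G = carrier H" and hom: "f \<in> hom G H"
    using assms(2) by (simp_all add: iso_iff)
  have "f x \<otimes>\<^bsub>H\<^esub> f y = f y \<otimes>\<^bsub>H\<^esub> f x \<longleftrightarrow> f (x \<otimes>\<^bsub>G\<^esub> y) = f (y \<otimes>\<^bsub>G\<^esub> x)"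
    using hom assms(3,4) by (simp add: hom_mult)
  also have "\<dots> \<longleftrightarrow> x \<otimes>\<^bsub>G\<^esub> y = y \<otimes>\<^bsub>G\<^esub> x"
    using inj assms(3,4) by (simp add: inj_on_eq_iff)
  finally show ?thesis
    using assms(3,4) inj surj by (auto simp: commuting_adj_def inj_on_eq_iff)
qed

lemma iso_enhanced_power_adj_iff:
  assumes "group G" and "group H" and "f \<in> iso G H" and "x \<in> carrier G" and "y \<in> carrier G"
  shows "enhanced_power_adj H (f x) (f y) \<longleftrightarrow> enhanced_power_adj G x y"
proof -
  have inj: "inj_on f (carrier G)" and surj: "f ` carrier G = carrier H"
    using assms(3) by (simp_all add: iso_iff)
  interpret group_hom G H f
    using assms by (simp add: group_hom_def group_hom_axioms_def iso_imp_homomorphism)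
  have gen_single: "generate H {f z} = f ` generate G {z}" if "z \<in> carrier G" for z
    using generate_img[of "{z}"] that by simp
  have gen_eq: "f ` generate G {x, y} = f ` generate G {z} \<longleftrightarrow> generate G {x, y} = generate G {z}"
    if "z \<in> carrier G" for z
  proof (rule inj_on_image_eq_iff[OF inj])
    show "generate G {x, y} \<subseteq> carrier G" and "generate G {z} \<subseteq> carrier G"
      using assms(4,5) that by (auto intro: G.generate_in_carrier[rotated])
  qed
  have "cyclic_subgroup H (generate H {f x, f y})
      \<longleftrightarrow> (\<exists>z \<in> f ` carrier G. f ` generate G {x, y} = generate H {z})"
    using generate_img[of "{x, y}"] assms(4,5) by (simp add: cyclic_subgroup_def surj)
  also have "\<dots> \<longleftrightarrow> (\<exists>z \<in> carrier G. f ` generate G {x, y} = f ` generate G {z})"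
    using gen_single by auto
  also have "\<dots> \<longleftrightarrow> cyclic_subgroup G (generate G {x, y})"
    using gen_eq by (auto simp: cyclic_subgroup_def)
  finally show ?thesis
    using assms(4,5) inj by (auto simp: enhanced_power_adj_def inj_on_eq_iff surj[symmetric])
qed

section \<open>The group of a coloured complete graph\<close>

lemma exists_inj_prime_labelling:
  assumes "finite I"
  shows "\<exists>p :: 'a \<Rightarrow> nat. inj_on p I \<and> (\<forall>i \<in> I. Factorial_Ring.prime (p i))"
proof -
  obtain B :: "nat set" where B: "finite B" "card B = card I" "B \<subseteq> {q. Factorial_Ring.prime q}"
    using infinite_arbitrarily_large[OF primes_infinite] by blast
  obtain p where "bij_betw p I B"
    using finite_same_card_bij[OF assms B(1)] B(2) by auto
  then have "inj_on p I" and "p ` I \<subseteq> {q. Factorial_Ring.prime q}"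
    using B(3) by (auto simp: bij_betw_def)
  then show ?thesis
    by blast
qed

definition distinct_pairs :: "'a set \<Rightarrow> ('a \<times> 'a) set" where
  "distinct_pairs V = {(s, t). s \<in> V \<and> t \<in> V \<and> s \<noteq> t}"

lemma finite_distinct_pairs: "finite V \<Longrightarrow> finite (distinct_pairs V)"
  by (rule finite_subset[of _ "V \<times> V"]) (auto simp: distinct_pairs_def)

fun colour_entry :: "colour \<Rightarrow> int \<times> int \<times> int" where
  "colour_entry Red = (0, 0, 0)"
| "colour_entry Green = (0, 0, 1)"
| "colour_entry Blue = (0, 1, 0)"

definition vertex_entry :: "('v \<Rightarrow> 'v \<Rightarrow> colour) \<Rightarrow> 'v \<Rightarrow> 'v \<times> 'v \<Rightarrow> int \<times> int \<times> int" where
  "vertex_entry c u e =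
     (if u = fst e then (1, 0, 0) else if u = snd e then colour_entry (c (fst e) (snd e)) else (0, 0, 0))"

lemma vertex_entry_cases:
  "vertex_entry c u e \<in> {(0, 0, 0), (1, 0, 0), (0, 1, 0), (0, 0, 1)}"
  by (cases "c (fst e) (snd e)") (auto simp: vertex_entry_def)

lemma vertex_entry_in_carrier:
  "n \<ge> 2 \<Longrightarrow> vertex_entry c u e \<in> carrier (heisenberg n)"
  using vertex_entry_cases[of c u e] by auto

lemma vertex_entry_pow_eq_one:
  assumes "n dvd int k"
  shows "vertex_entry c u e [^]\<^bsub>heisenberg n\<^esub> k = \<one>\<^bsub>heisenberg n\<^esub>"
proof (cases "vertex_entry c u e")
  case (fields a b d)
  then have "a * b = 0"
    using vertex_entry_cases[of c u e] by auto
  then show ?thesis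
    unfolding fields by (rule heisenberg_pow_eq_one[OF _ assms])
qed

lemma vertex_entries_commute:
  assumes "c u v \<noteq> Blue" and "c v u \<noteq> Blue"
  shows "vertex_entry c u e \<otimes>\<^bsub>heisenberg n\<^esub> vertex_entry c v e
       = vertex_entry c v e \<otimes>\<^bsub>heisenberg n\<^esub> vertex_entry c u e"
  using assms by (cases "c (fst e) (snd e)") (auto simp: vertex_entry_def)

lemma colour_entry_neq_source_entry: "colour_entry x \<noteq> (1, 0, 0)"
  by (cases x) auto

lemma vertex_entries_disjoint:
  assumes "u \<noteq> v" and "c u v = Red" and "c v u = Red"
  shows "vertex_entry c u e = (0, 0, 0) \<or> vertex_entry c v e = (0, 0, 0)"
  using assms by (auto simp: vertex_entry_def)

locale prime_labelled_colouring =
  fixes V :: "'v set" and c :: "'v \<Rightarrow> 'v \<Rightarrow> colour" and p :: "'v \<times> 'v \<Rightarrow> nat"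
  assumes finite_V: "finite V"
    and colour_sym: "\<And>u v. u \<in> V \<Longrightarrow> v \<in> V \<Longrightarrow> u \<noteq> v \<Longrightarrow> c u v = c v u"
    and prime_p: "\<And>e. e \<in> distinct_pairs V \<Longrightarrow> Factorial_Ring.prime (p e)"
    and inj_p: "inj_on p (distinct_pairs V)"
begin

definition model_group :: "('v \<times> 'v \<Rightarrow> int \<times> int \<times> int) monoid" where
  "model_group = product_group (distinct_pairs V) (\<lambda>e. heisenberg (int (p e)))"

definition embed :: "'v \<Rightarrow> 'v \<times> 'v \<Rightarrow> int \<times> int \<times> int" where
  "embed u = (\<lambda>e \<in> distinct_pairs V. vertex_entry c u e)"

definition support :: "'v \<Rightarrow> ('v \<times> 'v) set" where
  "support u = {e \<in> distinct_pairs V. vertex_entry c u e \<noteq> (0, 0, 0)}"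

lemma p_ge_2: "e \<in> distinct_pairs V \<Longrightarrow> int (p e) \<ge> 2"
  using prime_ge_2_nat[OF prime_p] by fastforce

lemma group_model_group: "group model_group"
  unfolding model_group_def using p_ge_2 by (intro product_group group_heisenberg) fastforce

lemma finite_model_group: "finite (carrier model_group)"
  using finite_distinct_pairs[OF finite_V] by (simp add: model_group_def finite_PiE)

lemma embed_in_carrier: "embed u \<in> carrier model_group"
proof -
  have "vertex_entry c u e \<in> carrier (heisenberg (p e))" if "e \<in> distinct_pairs V" for e
    using vertex_entry_in_carrier p_ge_2[OF that] .
  then show ?thesis
    by (simp add: model_group_def embed_def del: carrier_heisenberg)
qed

lemma embed_at_pair:
  assumes "u \<in> V" and "v \<in> V" and "u \<noteq> v"
  shows "embed u (u, v) = (1, 0, 0)" and "embed v (u, v) = colour_entry (c u v)"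
  using assms by (simp_all add: embed_def vertex_entry_def distinct_pairs_def)

lemma inj_on_embed: "inj_on embed V"
proof (rule inj_onI, rule ccontr)
  fix u v
  assume "u \<in> V" "v \<in> V" "embed u = embed v" "u \<noteq> v"
  then show False
    using embed_at_pair colour_entry_neq_source_entry by metis
qed

lemma embed_commute:
  assumes "u \<in> V" and "v \<in> V" and "u \<noteq> v" and "c u v \<noteq> Blue"
  shows "embed u \<otimes>\<^bsub>model_group\<^esub> embed v = embed v \<otimes>\<^bsub>model_group\<^esub> embed u"
proof -
  have "c v u \<noteq> Blue"
    using assms colour_sym by metis
  then show ?thesis
    using vertex_entries_commute[of c u v, OF assms(4)]
    by (simp add: model_group_def embed_def fun_eq_iff)
qed

lemma embed_not_commute:
  assumes "u \<in> V" and "v \<in> V" and "u \<noteq> v" and "c u v = Blue"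
  shows "embed u \<otimes>\<^bsub>model_group\<^esub> embed v \<noteq> embed v \<otimes>\<^bsub>model_group\<^esub> embed u"
proof
  have uv: "(u, v) \<in> distinct_pairs V"
    using assms by (simp add: distinct_pairs_def)
  assume "embed u \<otimes>\<^bsub>model_group\<^esub> embed v = embed v \<otimes>\<^bsub>model_group\<^esub> embed u"
  then have "embed u (u, v) \<otimes>\<^bsub>heisenberg (p (u, v))\<^esub> embed v (u, v)
      = embed v (u, v) \<otimes>\<^bsub>heisenberg (p (u, v))\<^esub> embed u (u, v)"
    using uv by (simp add: model_group_def fun_eq_iff split: if_splits)
  then show False
    using heisenberg_not_commute[OF p_ge_2[OF uv]] embed_at_pair[OF assms(1-3)] assms(4) by simp
qed

lemma embed_pow_support_prod: "embed u [^]\<^bsub>model_group\<^esub> (\<Prod>e \<in> support u. p e) = \<one>\<^bsub>model_group\<^esub>"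
proof -
  have "vertex_entry c u e [^]\<^bsub>heisenberg (p e)\<^esub> (\<Prod>e \<in> support u. p e) = (0, 0, 0)"
    if "e \<in> distinct_pairs V" for e
  proof (cases "e \<in> support u")
    case True
    have "finite (support u)"
      using finite_distinct_pairs[OF finite_V] by (simp add: support_def)
    then have "p e dvd (\<Prod>e \<in> support u. p e)"
      using True by (rule dvd_prodI)
    then show ?thesis
      using vertex_entry_pow_eq_one[of "int (p e)"] by simp
  next
    case False
    then show ?thesis
      using that by (simp add: support_def heisenberg_pow)
  qed
  then show ?thesis
    by (auto simp: model_group_def embed_def pow_product_group intro!: restrict_ext)
qed

lemma coprime_support_prods:
  assumes "support u \<inter> support v = {}"
  shows "coprime (\<Prod>e \<in> support u. p e) (\<Prod>e \<in> support v. p e)"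
proof (intro prod_coprime_left prod_coprime_right primes_coprime)
  fix e e' assume "e \<in> support u" "e' \<in> support v"
  moreover from this have "e \<noteq> e'"
    using assms by blast
  ultimately show "Factorial_Ring.prime (p e)" "Factorial_Ring.prime (p e')" "p e \<noteq> p e'"
    using prime_p inj_p by (auto simp: support_def inj_on_def)
qed

lemma support_disjoint_if_red:
  assumes "u \<in> V" and "v \<in> V" and "u \<noteq> v" and "c u v = Red"
  shows "support u \<inter> support v = {}"
  using assms vertex_entries_disjoint[of u v c] colour_sym by (auto simp: support_def)

lemma red_enhanced_power_adj:
  assumes "u \<in> V" and "v \<in> V" and "u \<noteq> v" and "c u v = Red"
  shows "enhanced_power_adj model_group (embed u) (embed v)"
proof -
  interpret group model_group
    by (rule group_model_group)
  have "generate model_group {embed u, embed v}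
      = generate model_group {embed u \<otimes>\<^bsub>model_group\<^esub> embed v}"
    using embed_in_carrier embed_commute[OF assms(1-3)] embed_pow_support_prod
      coprime_support_prods[OF support_disjoint_if_red[OF assms]] assms(4)
    by (intro generate_pair_eq_generate_mult) auto
  then show ?thesis
    using assms inj_on_embed by (auto simp: enhanced_power_adj_def cyclic_subgroup_def
        embed_in_carrier inj_on_eq_iff)
qed

lemma green_not_enhanced_power_adj:
  assumes "u \<in> V" and "v \<in> V" and "u \<noteq> v" and "c u v = Green"
  shows "\<not> enhanced_power_adj model_group (embed u) (embed v)"
proof
  interpret group model_group
    by (rule group_model_group)
  have uv: "(u, v) \<in> distinct_pairs V"
    using assms by (simp add: distinct_pairs_def)
  assume "enhanced_power_adj model_group (embed u) (embed v)"
  then obtain z where z: "z \<in> carrier model_group"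
    and gen: "generate model_group {embed u, embed v} = generate model_group {z}"
    by (auto simp: enhanced_power_adj_def cyclic_subgroup_def)
  have "embed u \<in> generate model_group {z}" and "embed v \<in> generate model_group {z}"
    using gen generate.incl[of _ "{embed u, embed v}"] by auto
  then obtain k l :: nat where "embed u = z [^]\<^bsub>model_group\<^esub> k"
    and "embed v = z [^]\<^bsub>model_group\<^esub> l"
    using generate_pow_on_finite_carrier[OF finite_model_group z] by auto
  then have "z (u, v) [^]\<^bsub>heisenberg (p (u, v))\<^esub> k = (1, 0, 0)"
    and "z (u, v) [^]\<^bsub>heisenberg (p (u, v))\<^esub> l = (0, 0, 1)"
    using embed_at_pair[OF assms(1-3)] assms(4) uv
    by (simp_all add: model_group_def pow_product_group)
  then show False
    using heisenberg_no_common_generator[OF p_ge_2[OF uv]] by blast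
qed

lemma embed_realises_colouring:
  assumes "u \<in> V" and "v \<in> V" and "u \<noteq> v"
  shows "(c u v = Red \<longrightarrow> enhanced_power_adj model_group (embed u) (embed v)) \<and>
         (c u v = Green \<longrightarrow> commuting_adj model_group (embed u) (embed v) \<and>
                            \<not> enhanced_power_adj model_group (embed u) (embed v)) \<and>
         (c u v = Blue \<longrightarrow> \<not> commuting_adj model_group (embed u) (embed v))"
proof -
  have "embed u \<noteq> embed v"
    using assms inj_on_embed by (auto simp: inj_on_eq_iff)
  then show ?thesis
    using red_enhanced_power_adj[OF assms] green_not_enhanced_power_adj[OF assms]
      embed_commute[OF assms] embed_not_commute[OF assms]
    by (auto simp: commuting_adj_def embed_in_carrier)
qed

end

theorem mainTheorem13:
  fixes V :: "'v set" and c :: "'v \<Rightarrow> 'v \<Rightarrow> colour"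
  assumes "finite V"
    and "\<And>u v. u \<in> V \<Longrightarrow> v \<in> V \<Longrightarrow> u \<noteq> v \<Longrightarrow> c u v = c v u"
  shows "\<exists>(G :: nat monoid) \<iota>. group G \<and> finite (carrier G) \<and>
           \<iota> ` V \<subseteq> carrier G \<and> inj_on \<iota> V \<and>
           (\<forall>u \<in> V. \<forall>v \<in> V. u \<noteq> v \<longrightarrow>
              (c u v = Red \<longrightarrow> enhanced_power_adj G (\<iota> u) (\<iota> v)) \<and>
              (c u v = Green \<longrightarrow> commuting_adj G (\<iota> u) (\<iota> v) \<and>
                                 \<not> enhanced_power_adj G (\<iota> u) (\<iota> v)) \<and>
              (c u v = Blue \<longrightarrow> \<not> commuting_adj G (\<iota> u) (\<iota> v)))"
proof -
  obtain p :: "'v \<times> 'v \<Rightarrow> nat"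
    where "inj_on p (distinct_pairs V)" and "\<forall>e \<in> distinct_pairs V. Factorial_Ring.prime (p e)"
    using exists_inj_prime_labelling[OF finite_distinct_pairs[OF assms(1)]] by blast
  then interpret prime_labelled_colouring V c p
    using assms by unfold_locales auto
  obtain H :: "nat monoid" and f where H: "group H" and f: "f \<in> iso model_group H"
    using countable_group_iso_nat_group[OF group_model_group countable_finite[OF finite_model_group]]
    by blast
  have "finite (carrier H)"
    using iso_finite[OF is_isoI[OF f]] finite_model_group by simp
  moreover have "(f \<circ> embed) ` V \<subseteq> carrier H" and "inj_on (f \<circ> embed) V"
    using f embed_in_carrier inj_on_embed
    by (auto simp: iso_iff intro!: comp_inj_on inj_on_subset[of f "carrier model_group"])
  moreover note transport =
    iso_commuting_adj_iff[OF group_model_group f embed_in_carrier embed_in_carrier]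
    iso_enhanced_power_adj_iff[OF group_model_group H f embed_in_carrier embed_in_carrier]
  ultimately show ?thesis
    using H embed_realises_colouring by (intro exI[of _ H] exI[of _ "f \<circ> embed"]) (simp add: transport)
qed

end
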